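(* Let $A\in\mathbb Z^{d\times n}$ with $\ker(A)\cap\mathbb N^n=\{0\}$, and let $I(A)\subseteq G(A)$ be the set of $g\in G(A)$ whose distance is not reduced by any element of $D(A)$. If $z\in\ker(A)\setminus G(A)$ is such that no element of $D(A)$ reduces the distance of $z$, then for any decomposition $z=g_1+\dots+g_k$ with $g_i\in G(A)$, $z^+=\sum_i g_i^+$ and $z^-=\sum_i g_i^-$, we have $g_i\in I(A)$ for each $i\in\{1,\dots,k\}$.
   Context: For $z\in\mathbb Z^n$, $z^\pm\in\mathbb N^n$ are the unique vectors with disjoint supports and $z=z^+-z^-$; $\|\cdot\|$ is the $1$-norm; $\le$ is coordinatewise. $G(A)$ is the set of nonzero $z\in\ker(A)$ admitting no decomposition $z=u+v$ with $u,v\in\ker(A)\setminus\{0\}$, $z^+=u^++v^+$, $z^-=u^-+v^-$. A positive (resp. negative) distance decomposition of $z\in\ker(A)$ is $z=u+v$ with $u,v\in\ker(A)\setminus\{0\}$, $u^+\le z^+$ (resp. $u^-\le z^-$), $\|v\|<\|z\|$; $D(A)$ is the set of nonzero $z\in\ker(A)$ admitting neither a positive nor a negative distance decomposition. For nonzero $w\in\ker(A)$, $u\in\ker(A)$ reduces the distance of $w$ if there exist $(p,q)\in\{(w^+,w^-),(w^-,w^+)\}$ and $\varepsilon\in\{\pm1\}$ with $p+\varepsilon u\in\mathbb N^n$ and $\|p+\varepsilon u-q\|<\|w\|$. *)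

theory Defs
  imports "HOL-Analysis.Finite_Cartesian_Product"
begin

text \<open>Integer vectors in Z^n are modelled as int^'n (n = CARD('n)), an integer
d x n matrix as int^'n^'d.\<close>

definition kerA :: "int^'n^'d \<Rightarrow> (int^'n) set" where
  "kerA A = {z. A *v z = 0}"

definition posp :: "int^'n \<Rightarrow> int^'n" where
  "posp z = (\<chi> i. max (z$i) 0)"

definition negp :: "int^'n \<Rightarrow> int^'n" where
  "negp z = (\<chi> i. max (- (z$i)) 0)"

definition norm1 :: "int^'n \<Rightarrow> int" where
  "norm1 z = (\<Sum>i\<in>UNIV. \<bar>z$i\<bar>)"

definition natvec :: "int^'n \<Rightarrow> bool" where
  "natvec z \<longleftrightarrow> (\<forall>i. 0 \<le> z$i)"

definition cwle :: "int^'n \<Rightarrow> int^'n \<Rightarrow> bool" where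
  "cwle u v \<longleftrightarrow> (\<forall>i. u$i \<le> v$i)"

definition GA :: "int^'n^'d \<Rightarrow> (int^'n) set" where
  "GA A = {z. z \<in> kerA A \<and> z \<noteq> 0 \<and>
     \<not> (\<exists>u v. u \<in> kerA A \<and> v \<in> kerA A \<and> u \<noteq> 0 \<and> v \<noteq> 0 \<and> z = u + v \<and>
            posp z = posp u + posp v \<and> negp z = negp u + negp v)}"

definition pos_dist_decomp :: "int^'n^'d \<Rightarrow> int^'n \<Rightarrow> int^'n \<Rightarrow> int^'n \<Rightarrow> bool" where
  "pos_dist_decomp A z u v \<longleftrightarrow> z = u + v \<and> u \<in> kerA A \<and> v \<in> kerA A \<and> u \<noteq> 0 \<and> v \<noteq> 0 \<and>
     cwle (posp u) (posp z) \<and> norm1 v < norm1 z"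

definition neg_dist_decomp :: "int^'n^'d \<Rightarrow> int^'n \<Rightarrow> int^'n \<Rightarrow> int^'n \<Rightarrow> bool" where
  "neg_dist_decomp A z u v \<longleftrightarrow> z = u + v \<and> u \<in> kerA A \<and> v \<in> kerA A \<and> u \<noteq> 0 \<and> v \<noteq> 0 \<and>
     cwle (negp u) (negp z) \<and> norm1 v < norm1 z"

definition DA :: "int^'n^'d \<Rightarrow> (int^'n) set" where
  "DA A = {z. z \<in> kerA A \<and> z \<noteq> 0 \<and>
     \<not> (\<exists>u v. pos_dist_decomp A z u v) \<and> \<not> (\<exists>u v. neg_dist_decomp A z u v)}"

definition reduces_dist :: "int^'n^'d \<Rightarrow> int^'n \<Rightarrow> int^'n \<Rightarrow> bool" where
  "reduces_dist A u w \<longleftrightarrow> w \<in> kerA A \<and> w \<noteq> 0 \<and> u \<in> kerA A \<and>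
     (\<exists>(p, q) \<in> {(posp w, negp w), (negp w, posp w)}. \<exists>\<epsilon> \<in> {1, -1::int}.
        natvec (p + \<epsilon> *s u) \<and> norm1 (p + \<epsilon> *s u - q) < norm1 w)"

definition IA :: "int^'n^'d \<Rightarrow> (int^'n) set" where
  "IA A = {g \<in> GA A. \<not> (\<exists>u \<in> DA A. reduces_dist A u g)}"

end

theory Submission
  imports Defs
begin

text \<open>Each g_i of a conformal decomposition of z is a conformal summand: z = g_i + h
with z^+ = g_i^+ + h^+ and z^- = g_i^- + h^-. If u reduces the distance of g_i via
p + eps u \<ge> 0 with (p, q) = (g_i^+, g_i^-) or (g_i^-, g_i^+), then adding the matching
part of h to p and to q keeps p + eps u nonnegative and changes p + eps u - q by +h or -h.
As the 1-norm is additive on conformal sums, ||z|| = ||g_i|| + ||h||, so u also reduces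
the distance of z.\<close>

lemma posp_component [simp]: "posp x $ i = max (x $ i) 0"
  unfolding posp_def by simp

lemma negp_component [simp]: "negp x $ i = max (- (x $ i)) 0"
  unfolding negp_def by simp

lemma posp_minus_negp: "posp x - negp x = x"
  by (simp add: vec_eq_iff max_def)

lemma natvec_posp: "natvec (posp x)" and natvec_negp: "natvec (negp x)"
  unfolding natvec_def by simp_all

lemma natvec_add: "natvec a \<Longrightarrow> natvec b \<Longrightarrow> natvec (a + b)"
  unfolding natvec_def by simp

lemma natvec_sum: "(\<And>j. j \<in> S \<Longrightarrow> natvec (f j)) \<Longrightarrow> natvec (\<Sum>j\<in>S. f j)"
  unfolding natvec_def by (simp add: sum_component sum_nonneg)

lemma posp_negp_diff_if_dominated:
  assumes "natvec P" "natvec N" "cwle P (posp x)" "cwle N (negp x)"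
  shows "posp (P - N) = P" "negp (P - N) = N"
proof -
  have "max (P $ i - N $ i) 0 = P $ i \<and> max (N $ i - P $ i) 0 = N $ i" for i
  proof -
    have "0 \<le> P $ i" "0 \<le> N $ i" "P $ i \<le> max (x $ i) 0" "N $ i \<le> max (- (x $ i)) 0"
      using assms unfolding natvec_def cwle_def by simp_all
    then show ?thesis by (auto simp: max_def split: if_splits)
  qed
  then show "posp (P - N) = P" "negp (P - N) = N"
    by (simp_all add: vec_eq_iff)
qed

lemma conformal_sum_split:
  fixes g :: "'a \<Rightarrow> int^'n"
  assumes "finite S" "i \<in> S"
    and pos: "posp (\<Sum>j\<in>S. g j) = (\<Sum>j\<in>S. posp (g j))"
    and neg: "negp (\<Sum>j\<in>S. g j) = (\<Sum>j\<in>S. negp (g j))"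
  defines "h \<equiv> \<Sum>j\<in>S - {i}. g j"
  shows "(\<Sum>j\<in>S. g j) = g i + h"
    and "posp (\<Sum>j\<in>S. g j) = posp (g i) + posp h"
    and "negp (\<Sum>j\<in>S. g j) = negp (g i) + negp h"
proof -
  define P where "P = (\<Sum>j\<in>S - {i}. posp (g j))"
  define N where "N = (\<Sum>j\<in>S - {i}. negp (g j))"
  have split_pos: "posp (\<Sum>j\<in>S. g j) = posp (g i) + P"
    and split_neg: "negp (\<Sum>j\<in>S. g j) = negp (g i) + N"
    unfolding pos neg P_def N_def using assms(1,2) by (simp_all add: sum.remove)
  have "natvec P" "natvec N"
    unfolding P_def N_def by (simp_all add: natvec_sum natvec_posp natvec_negp)
  moreover have "cwle P (posp (\<Sum>j\<in>S. g j))" "cwle N (negp (\<Sum>j\<in>S. g j))"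
    unfolding split_pos split_neg cwle_def by simp_all
  moreover have "h = P - N"
    unfolding h_def P_def N_def by (simp add: sum_subtractf[symmetric] posp_minus_negp)
  ultimately have "posp h = P" "negp h = N"
    using posp_negp_diff_if_dominated by blast+
  then show "posp (\<Sum>j\<in>S. g j) = posp (g i) + posp h"
    and "negp (\<Sum>j\<in>S. g j) = negp (g i) + negp h"
    using split_pos split_neg by simp_all
  show "(\<Sum>j\<in>S. g j) = g i + h"
    unfolding h_def using assms(1,2) by (simp add: sum.remove)
qed

lemma norm1_nonneg: "0 \<le> norm1 x"
  unfolding norm1_def by (simp add: sum_nonneg)

lemma norm1_zero [simp]: "norm1 (0 :: int^'n) = 0"
  unfolding norm1_def by simp

lemma norm1_add_le: "norm1 (a + b) \<le> norm1 a + norm1 b"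
  unfolding norm1_def by (simp add: sum.distrib[symmetric] sum_mono abs_triangle_ineq)

lemma norm1_diff_le: "norm1 (a - b) \<le> norm1 a + norm1 b"
  unfolding norm1_def by (simp add: sum.distrib[symmetric] sum_mono abs_triangle_ineq4)

lemma norm1_eq_sum_posp_negp: "norm1 x = (\<Sum>i\<in>UNIV. posp x $ i + negp x $ i)"
  unfolding norm1_def by (rule sum.cong) (auto simp: max_def)

lemma norm1_conformal_add:
  assumes "posp (g + h) = posp g + posp h" "negp (g + h) = negp g + negp h"
  shows "norm1 (g + h) = norm1 g + norm1 h"
  unfolding norm1_eq_sum_posp_negp assms by (simp add: sum.distrib[symmetric] algebra_simps)

lemma reduces_dist_conformal_add:
  assumes red: "reduces_dist A u g" and ker: "g + h \<in> kerA A"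
    and pos: "posp (g + h) = posp g + posp h" and neg: "negp (g + h) = negp g + negp h"
  shows "reduces_dist A u (g + h)"
proof -
  from red obtain p q \<epsilon> where pq: "(p, q) \<in> {(posp g, negp g), (negp g, posp g)}"
    and \<epsilon>: "\<epsilon> \<in> {1, -1}" and nat: "natvec (p + \<epsilon> *s u)"
    and lt: "norm1 (p + \<epsilon> *s u - q) < norm1 g"
    unfolding reduces_dist_def by blast
  have norm_sum: "norm1 (g + h) = norm1 g + norm1 h"
    using norm1_conformal_add[OF pos neg] .
  have lifted: "\<exists>(p', q') \<in> {(posp (g + h), negp (g + h)), (negp (g + h), posp (g + h))}.
      natvec (p' + \<epsilon> *s u) \<and> norm1 (p' + \<epsilon> *s u - q') < norm1 (g + h)"
  proof (cases "(p, q) = (posp g, negp g)")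
    case True
    have eq: "posp (g + h) + \<epsilon> *s u - negp (g + h) = (p + \<epsilon> *s u - q) + h"
      using True pos neg posp_minus_negp[of h] by (simp add: algebra_simps)
    have "norm1 (posp (g + h) + \<epsilon> *s u - negp (g + h)) < norm1 (g + h)"
      unfolding eq using norm1_add_le[of "p + \<epsilon> *s u - q" h] lt norm_sum by linarith
    moreover have "natvec (posp (g + h) + \<epsilon> *s u)"
      using natvec_add[OF nat natvec_posp[of h]] True pos by (simp add: algebra_simps)
    ultimately show ?thesis by blast
  next
    case False
    then have pq': "(p, q) = (negp g, posp g)" using pq by blast
    have eq: "negp (g + h) + \<epsilon> *s u - posp (g + h) = (p + \<epsilon> *s u - q) - h"
      using pq' pos neg posp_minus_negp[of h] by (simp add: algebra_simps)
    have "norm1 (negp (g + h) + \<epsilon> *s u - posp (g + h)) < norm1 (g + h)"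
      unfolding eq using norm1_diff_le[of "p + \<epsilon> *s u - q" h] lt norm_sum by linarith
    moreover have "natvec (negp (g + h) + \<epsilon> *s u)"
      using natvec_add[OF nat natvec_negp[of h]] pq' neg by (simp add: algebra_simps)
    ultimately show ?thesis by blast
  qed
  have "g + h \<noteq> 0"
    using lt norm_sum norm1_nonneg[of "p + \<epsilon> *s u - q"] norm1_nonneg[of h] by force
  then show ?thesis
    using red ker \<epsilon> lifted unfolding reduces_dist_def by blast
qed

theorem proposition8p11:
  fixes A :: "int^'n^'d" and z :: "int^'n" and g :: "nat \<Rightarrow> int^'n" and k :: nat
  assumes "\<forall>x \<in> kerA A. natvec x \<longrightarrow> x = 0"
    and "z \<in> kerA A" and "z \<notin> GA A"
    and "\<not> (\<exists>u \<in> DA A. reduces_dist A u z)"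
    and "\<forall>i \<in> {1..k}. g i \<in> GA A"
    and "z = (\<Sum>i = 1..k. g i)"
    and "posp z = (\<Sum>i = 1..k. posp (g i))"
    and "negp z = (\<Sum>i = 1..k. negp (g i))"
  shows "\<forall>i \<in> {1..k}. g i \<in> IA A"
proof
  fix i assume i: "i \<in> {1..k}"
  define h where "h = (\<Sum>j\<in>{1..k} - {i}. g j)"
  have split: "z = g i + h" "posp z = posp (g i) + posp h" "negp z = negp (g i) + negp h"
    using conformal_sum_split[of "{1..k}" i g] i assms(6-8) unfolding h_def by simp_all
  have "reduces_dist A u z" if "reduces_dist A u (g i)" for u
    using reduces_dist_conformal_add[OF that, of h] split assms(2) by simp
  then show "g i \<in> IA A"
    using assms(4,5) i unfolding IA_def by blast
qed

end
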